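(* Let $T$ be a minimal tree with $n$ vertices. (i) Every vertex of $T$ other than the root is either a leaf or has at least two children (i.e., no non-root vertex has degree $2$). (ii) If $n\ge 8$, then the root of $T$ has exactly two children.
   Context: A rooted tree $T$ is a finite tree with a distinguished vertex, its root; its order $|T|$ is its number of vertices. For vertices $u,v$, the infimum of $u$ and $v$ is the vertex common to the path from $u$ to the root and the path from $v$ to the root that is furthest from the root. A set $X\subseteq V(T)$ is infima closed if the infimum of any two elements of $X$ lies in $X$. $I(T)$ denotes the number of nonempty infima closed subsets of $V(T)$. For $n\ge1$, $m_n=\min\{I(T): T \text{ a rooted tree with } n \text{ vertices}\}$; a rooted tree $T$ with $I(T)=m_{|T|}$ is called minimal. *)

theory Defs
  imports Main
begin

text \<open>Rooted trees as rose trees; a vertex is identified with its position,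
  i.e. the list of child indices on the path from the root. The root is [].\<close>

datatype rtree = Node "rtree list"

fun kids :: "rtree \<Rightarrow> rtree list" where
  "kids (Node ts) = ts"

fun sub :: "rtree \<Rightarrow> nat list \<Rightarrow> rtree option" where
  "sub t [] = Some t"
| "sub (Node ts) (i # p) = (if i < length ts then sub (ts ! i) p else None)"

definition verts :: "rtree \<Rightarrow> nat list set" where
  "verts T = {p. sub T p \<noteq> None}"

definition order :: "rtree \<Rightarrow> nat" where
  "order T = card (verts T)"

definition nchildren :: "rtree \<Rightarrow> nat list \<Rightarrow> nat" where
  "nchildren T p = length (kids (the (sub T p)))"

text \<open>Infimum of two vertices: the deepest common ancestor, i.e. the longest
  common prefix of their positions.\<close>
fun infimum :: "nat list \<Rightarrow> nat list \<Rightarrow> nat list" where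
  "infimum (x # xs) (y # ys) = (if x = y then x # infimum xs ys else [])"
| "infimum _ _ = []"

definition infima_closed :: "rtree \<Rightarrow> nat list set \<Rightarrow> bool" where
  "infima_closed T X \<longleftrightarrow> X \<subseteq> verts T \<and> (\<forall>u\<in>X. \<forall>v\<in>X. infimum u v \<in> X)"

definition I :: "rtree \<Rightarrow> nat" where
  "I T = card {X. X \<noteq> {} \<and> infima_closed T X}"

definition m :: "nat \<Rightarrow> nat" where
  "m n = Min {I T | T. order T = n}"

definition minimal :: "rtree \<Rightarrow> bool" where
  "minimal T \<longleftrightarrow> I T = m (order T)"

end

theory Submission
  imports Defs "HOL-Library.FuncSet" "HOL-Library.Multiset"
begin

text \<open>An infima closed set containing the root consists of the root and a (possibly empty)
  closed set in each child subtree, while a nonempty one avoiding the root lies inside a single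
  child subtree. Hence \<open>I\<close> obeys the recursion \<open>I(T) = \<Prod>(1 + I(T\<^sub>i)) + \<Sum>I(T\<^sub>i)\<close> over the
  subtrees \<open>T\<^sub>i\<close> of the root, and a tree is not minimal as soon as a local rearrangement
  preserving the order lowers this quantity. A non-root vertex with a single child is removed
  by hanging that child on its parent and keeping the vertex as a leaf. If the root has one
  child, its grandchildren are lifted. If it has at least three children and the tree has at
  least eight vertices, then either three leaf children merge into a cherry, or a child moves
  into the lighter of two non-leaf children, or the children are \<open>x\<close> and two leaves and the
  surplus inside \<open>x\<close> is redistributed.\<close>

abbreviation leaf :: rtree where
  "leaf \<equiv> Node []"

abbreviation cherry :: rtree where
  "cherry \<equiv> Node [leaf, leaf]"

lemma verts_Node: "verts (Node ts) = insert [] (\<Union>i<length ts. (#) i ` verts (ts ! i))"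
proof -
  have "p \<in> verts (Node ts) \<longleftrightarrow> p \<in> insert [] (\<Union>i<length ts. (#) i ` verts (ts ! i))" for p
    by (cases p) (auto simp: verts_def)
  then show ?thesis by blast
qed

lemma Cons_in_verts_Node: "i # p \<in> verts (Node ts) \<longleftrightarrow> i < length ts \<and> p \<in> verts (ts ! i)"
  by (auto simp: verts_def)

lemma finite_verts: "finite (verts T)"
  by (induction T) (auto simp: verts_Node)

lemma order_Node [simp]: "order (Node ts) = Suc (\<Sum>t\<leftarrow>ts. order t)"
proof -
  let ?U = "\<Union>i<length ts. (#) i ` verts (ts ! i)"
  have "card ?U = (\<Sum>i<length ts. card ((#) i ` verts (ts ! i)))"
    by (rule card_UN_disjoint) (auto simp: finite_verts)
  also have "\<dots> = (\<Sum>t\<leftarrow>ts. order t)"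
    by (simp add: card_image order_def sum.list_conv_set_nth atLeast0LessThan)
  finally have "card ?U = (\<Sum>t\<leftarrow>ts. order t)" .
  moreover have "[] \<notin> ?U"
    by blast
  ultimately show ?thesis
    by (simp add: order_def verts_Node finite_verts)
qed

subsection \<open>Counting infima closed sets\<close>

definition infima_closed_sets :: "rtree \<Rightarrow> nat list set set" where
  "infima_closed_sets T = {X. infima_closed T X}"

lemma finite_infima_closed_sets: "finite (infima_closed_sets T)"
proof -
  have "infima_closed_sets T \<subseteq> Pow (verts T)"
    by (auto simp: infima_closed_sets_def infima_closed_def)
  then show ?thesis
    using finite_verts by (meson finite_Pow_iff finite_subset)
qed

lemma empty_in_infima_closed_sets: "{} \<in> infima_closed_sets T"
  by (simp add: infima_closed_sets_def infima_closed_def)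

lemma card_infima_closed_sets: "card (infima_closed_sets T) = Suc (I T)"
proof -
  have "{X. X \<noteq> {} \<and> infima_closed T X} = infima_closed_sets T - {{}}"
    by (auto simp: infima_closed_sets_def)
  then show ?thesis
    unfolding I_def
    using card_Suc_Diff1[OF finite_infima_closed_sets empty_in_infima_closed_sets] by simp
qed

lemma infima_closed_sets_child:
  assumes "X \<in> infima_closed_sets (Node ts)" "i < length ts"
  shows "{p. i # p \<in> X} \<in> infima_closed_sets (ts ! i)"
  using assms unfolding infima_closed_sets_def infima_closed_def
  by (auto simp: Cons_in_verts_Node) (metis infimum.simps(1))

lemma infima_closed_sets_elem:
  assumes "X \<in> infima_closed_sets (Node ts)" "p \<in> X"
  shows "p = [] \<or> (\<exists>i q. p = i # q \<and> i < length ts)"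
  using assms unfolding infima_closed_sets_def infima_closed_def
  by (cases p) (auto simp: Cons_in_verts_Node)

lemma card_infima_closed_sets_with_root:
  "card {X \<in> infima_closed_sets (Node ts). [] \<in> X}
     = (\<Prod>i<length ts. card (infima_closed_sets (ts ! i)))"
proof -
  define k where "k = length ts"
  define restrict where "restrict X = (\<lambda>i\<in>{..<k}. {p. i # p \<in> X})" for X :: "nat list set"
  define glue where "glue F = insert [] (\<Union>i<k. (#) i ` F i)" for F :: "nat \<Rightarrow> nat list set"
  have "bij_betw restrict {X \<in> infima_closed_sets (Node ts). [] \<in> X}
          (PiE {..<k} (\<lambda>i. infima_closed_sets (ts ! i)))"
  proof (rule bij_betw_byWitness[where f' = glue])
    show "\<forall>X\<in>{X \<in> infima_closed_sets (Node ts). [] \<in> X}. glue (restrict X) = X"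
    proof
      fix X assume X: "X \<in> {X \<in> infima_closed_sets (Node ts). [] \<in> X}"
      show "glue (restrict X) = X"
      proof
        show "glue (restrict X) \<subseteq> X" using X by (auto simp: glue_def restrict_def)
        show "X \<subseteq> glue (restrict X)"
          using X infima_closed_sets_elem[of X ts] by (auto simp: glue_def restrict_def k_def)
      qed
    qed
    show "\<forall>F\<in>PiE {..<k} (\<lambda>i. infima_closed_sets (ts ! i)). restrict (glue F) = F"
      by (auto simp: restrict_def glue_def PiE_def extensional_def fun_eq_iff)
    show "restrict ` {X \<in> infima_closed_sets (Node ts). [] \<in> X}
            \<subseteq> PiE {..<k} (\<lambda>i. infima_closed_sets (ts ! i))"
      using infima_closed_sets_child by (auto simp: restrict_def k_def)
    show "glue ` PiE {..<k} (\<lambda>i. infima_closed_sets (ts ! i))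
            \<subseteq> {X \<in> infima_closed_sets (Node ts). [] \<in> X}"
    proof
      fix X assume "X \<in> glue ` PiE {..<k} (\<lambda>i. infima_closed_sets (ts ! i))"
      then obtain F where F: "F \<in> PiE {..<k} (\<lambda>i. infima_closed_sets (ts ! i))" and X: "X = glue F"
        by auto
      have Fi: "F i \<subseteq> verts (ts ! i) \<and> (\<forall>u\<in>F i. \<forall>v\<in>F i. infimum u v \<in> F i)" if "i < k" for i
        using F that by (auto simp: infima_closed_sets_def infima_closed_def)
      have "X \<subseteq> verts (Node ts)"
        using Fi unfolding X glue_def verts_Node k_def by blast
      moreover have "infimum u v \<in> X" if "u \<in> X" "v \<in> X" for u v
        using that Fi unfolding X glue_def by auto blast
      ultimately show "X \<in> {X \<in> infima_closed_sets (Node ts). [] \<in> X}"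
        by (auto simp: infima_closed_sets_def infima_closed_def X glue_def)
    qed
  qed
  then show ?thesis
    by (simp add: bij_betw_same_card card_PiE k_def)
qed

text \<open>Two vertices in different child subtrees have the root as infimum.\<close>

lemma infima_closed_sets_without_root:
  "{X \<in> infima_closed_sets (Node ts). [] \<notin> X \<and> X \<noteq> {}}
     = (\<Union>i<length ts. (`) ((#) i) ` (infima_closed_sets (ts ! i) - {{}}))" (is "?B = ?U")
proof
  show "?B \<subseteq> ?U"
  proof
    fix X assume XB: "X \<in> ?B"
    then obtain p0 where p0: "p0 \<in> X" by auto
    with XB infima_closed_sets_elem[of X ts p0] obtain i q where iq: "p0 = i # q" "i < length ts"
      by auto
    have "\<exists>r. p = i # r" if "p \<in> X" for p
    proof -
      from XB that infima_closed_sets_elem[of X ts p] obtain j r where p: "p = j # r" by auto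
      have "infimum p0 p \<in> X"
        using XB p0 that by (auto simp: infima_closed_sets_def infima_closed_def)
      then have "j = i" using XB iq p by (auto split: if_splits)
      then show ?thesis using p by blast
    qed
    then have "X = (#) i ` {p. i # p \<in> X}" by auto
    moreover have "{p. i # p \<in> X} \<in> infima_closed_sets (ts ! i) - {{}}"
      using infima_closed_sets_child[of X ts i] XB iq p0 by auto
    ultimately show "X \<in> ?U" using iq by blast
  qed
  show "?U \<subseteq> ?B"
    by (auto simp: infima_closed_sets_def infima_closed_def Cons_in_verts_Node)
qed

lemma card_infima_closed_sets_without_root:
  "card {X \<in> infima_closed_sets (Node ts). [] \<notin> X \<and> X \<noteq> {}}
     = (\<Sum>i<length ts. card (infima_closed_sets (ts ! i)) - 1)"
proof -
  have inj: "inj_on ((`) ((#) i)) Y" for i and Y :: "nat list set set"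
    by (rule inj_onI) (simp add: inj_image_eq_iff)
  show ?thesis
    unfolding infima_closed_sets_without_root
    by (subst card_UN_disjoint)
       (auto simp: finite_infima_closed_sets card_image[OF inj] empty_in_infima_closed_sets)
qed

lemma I_Node [simp]: "I (Node ts) = (\<Prod>t\<leftarrow>ts. Suc (I t)) + (\<Sum>t\<leftarrow>ts. I t)"
proof -
  let ?C = "infima_closed_sets (Node ts)"
  let ?A = "{X \<in> ?C. [] \<in> X}" and ?B = "{X \<in> ?C. [] \<notin> X \<and> X \<noteq> {}}"
  have fin: "finite ?A" "finite ?B"
    using finite_infima_closed_sets by auto
  have "?C = insert {} (?A \<union> ?B)"
    using empty_in_infima_closed_sets by blast
  then have "card ?C = card (insert {} (?A \<union> ?B))"
    by (rule arg_cong)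
  also have "\<dots> = Suc (card (?A \<union> ?B))"
    using fin by (intro card_insert_disjoint) auto
  also have "card (?A \<union> ?B) = card ?A + card ?B"
    using fin by (rule card_Un_disjoint) blast
  also have "card ?A = (\<Prod>t\<leftarrow>ts. Suc (I t))"
    by (simp add: card_infima_closed_sets_with_root card_infima_closed_sets
        prod.list_conv_set_nth atLeast0LessThan)
  also have "card ?B = (\<Sum>t\<leftarrow>ts. I t)"
    by (simp add: card_infima_closed_sets_without_root card_infima_closed_sets
        sum.list_conv_set_nth atLeast0LessThan)
  finally show ?thesis
    by (simp add: card_infima_closed_sets)
qed

lemma I_le_two_pow_order: "I T \<le> 2 ^ order T"
proof -
  have "{X. X \<noteq> {} \<and> infima_closed T X} \<subseteq> Pow (verts T)"
    by (auto simp: infima_closed_def)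
  then have "I T \<le> card (Pow (verts T))"
    unfolding I_def by (intro card_mono) (auto simp: finite_verts)
  then show ?thesis
    by (simp add: card_Pow order_def finite_verts)
qed

lemma prod_Suc_I_pos: "0 < (\<Prod>t\<leftarrow>ts. Suc (I t))"
  by (induction ts) auto

lemma I_pos: "0 < I t"
  by (cases t) (simp add: prod_Suc_I_pos)

lemma three_le_I_if_not_leaf:
  assumes "t \<noteq> leaf"
  shows "3 \<le> I t"
proof -
  obtain u us where t: "t = Node (u # us)"
    using assms by (metis kids.cases neq_Nil_conv)
  have "2 * 1 \<le> Suc (I u) * (\<Prod>t\<leftarrow>us. Suc (I t))"
    using I_pos[of u] prod_Suc_I_pos[of us] by (intro mult_le_mono) auto
  then show ?thesis
    using I_pos[of u] by (simp add: t)
qed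

lemma two_pow_length_le_prod_Suc_I: "2 ^ length ts \<le> (\<Prod>t\<leftarrow>ts. Suc (I t))"
proof (induction ts)
  case (Cons t ts)
  have "2 * 2 ^ length ts \<le> Suc (I t) * (\<Prod>t\<leftarrow>ts. Suc (I t))"
    using I_pos[of t] Cons.IH by (intro mult_le_mono) auto
  then show ?case
    by simp
qed simp

lemma four_le_prod_Suc_I:
  assumes "2 \<le> length ts \<or> (\<exists>t\<in>set ts. t \<noteq> leaf)"
  shows "4 \<le> (\<Prod>t\<leftarrow>ts. Suc (I t))"
  using assms
proof
  assume "2 \<le> length ts"
  then have "(2::nat) ^ 2 \<le> 2 ^ length ts"
    by (rule power_increasing) simp
  then show ?thesis
    using two_pow_length_le_prod_Suc_I[of ts] by simp
next
  assume "\<exists>t\<in>set ts. t \<noteq> leaf"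
  then obtain xs t ys where ts: "ts = xs @ t # ys" and "t \<noteq> leaf"
    by (metis split_list)
  then have "1 * 4 * 1 \<le> (\<Prod>t\<leftarrow>xs. Suc (I t)) * Suc (I t) * (\<Prod>t\<leftarrow>ys. Suc (I t))"
    using three_le_I_if_not_leaf prod_Suc_I_pos by (intro mult_le_mono) (auto simp: Suc_le_eq)
  then show ?thesis
    by (simp add: ts algebra_simps)
qed

lemma Suc_sum_I_le_prod_Suc_I: "Suc (\<Sum>t\<leftarrow>ts. I t) \<le> (\<Prod>t\<leftarrow>ts. Suc (I t))"
proof (induction ts)
  case (Cons t ts)
  have "Suc (\<Sum>t\<leftarrow>t # ts. I t) \<le> Suc (I t) * Suc (\<Sum>t\<leftarrow>ts. I t)"
    by simp
  also have "\<dots> \<le> Suc (I t) * (\<Prod>t\<leftarrow>ts. Suc (I t))"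
    using Cons.IH by (rule mult_le_mono2)
  finally show ?case
    by simp
qed simp

definition improves :: "rtree \<Rightarrow> rtree \<Rightarrow> bool" where
  "improves T' T \<longleftrightarrow> order T' = order T \<and> I T' < I T"

lemma not_minimal_if_improves:
  assumes "improves T' T"
  shows "\<not> minimal T"
proof
  assume "minimal T"
  let ?S = "{I T | T. order T = order T'}"
  have "?S \<subseteq> {..2 ^ order T'}"
    by clarsimp (metis I_le_two_pow_order)
  then have "Min ?S \<le> I T'"
    by (intro Min_le) (auto intro: finite_subset)
  with \<open>minimal T\<close> assms show False
    by (simp add: minimal_def m_def improves_def)
qed

lemma improves_child:
  assumes "improves t' t"
  shows "improves (Node (xs @ t' # ys)) (Node (xs @ t # ys))"
proof -
  let ?P = "(\<Prod>t\<leftarrow>xs. Suc (I t)) * (\<Prod>t\<leftarrow>ys. Suc (I t))"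
  have "I t' < I t" "order t' = order t"
    using assms by (simp_all add: improves_def)
  moreover have "I t' + I t' * ?P < I t + I t * ?P"
    using \<open>I t' < I t\<close> by (intro add_less_le_mono mult_le_mono1) auto
  ultimately show ?thesis
    by (simp add: improves_def algebra_simps)
qed

lemma improves_at:
  assumes "sub T p = Some t" and "improves t' t"
  shows "\<exists>T'. improves T' T"
  using assms(1)
proof (induction T arbitrary: p)
  case (Node ts)
  show ?case
  proof (cases p)
    case Nil
    then show ?thesis
      using Node.prems assms(2) by auto
  next
    case (Cons i q)
    with Node.prems have i: "i < length ts" and q: "sub (ts ! i) q = Some t"
      by (auto split: if_splits)
    obtain t'' where "improves t'' (ts ! i)"
      using Node.IH[OF nth_mem[OF i] q] by blast
    then have "improves (Node (take i ts @ t'' # drop (Suc i) ts)) (Node ts)"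
      using improves_child id_take_nth_drop[OF i] by metis
    then show ?thesis ..
  qed
qed

lemma improves_child_cong:
  assumes "I t = I s" and "order t = order s"
  shows "improves T (Node (xs @ t # ys)) \<longleftrightarrow> improves T (Node (xs @ s # ys))"
proof -
  have "I (Node (xs @ t # ys)) = I (Node (xs @ s # ys))"
    "order (Node (xs @ t # ys)) = order (Node (xs @ s # ys))"
    by (simp_all only: I_Node order_Node map_append list.map sum_list_append prod_list.append
        sum_list.Cons prod_list.Cons assms)
  then show ?thesis
    unfolding improves_def by (simp only:)
qed

lemma order_Node_mset: "mset ts = mset ts' \<Longrightarrow> order (Node ts) = order (Node ts')"
  by (metis order_Node mset_map sum_mset_sum_list)

lemma I_Node_mset: "mset ts = mset ts' \<Longrightarrow> I (Node ts) = I (Node ts')"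
  by (metis I_Node mset_map sum_mset_sum_list prod_mset_prod_list)

lemma improves_mset:
  "mset ts = mset ts' \<Longrightarrow> improves T (Node ts) \<longleftrightarrow> improves T (Node ts')"
  unfolding improves_def using order_Node_mset I_Node_mset by metis

subsection \<open>Local improvements\<close>

lemma improves_contract_unary:
  "improves (Node (S # leaf # rest)) (Node (Node [S] # rest))"
  using I_pos[of S] by (simp add: improves_def algebra_simps)

lemma improves_contract_unary_root:
  assumes "us \<noteq> []"
  shows "improves (Node (leaf # us)) (Node [Node us])"
proof -
  obtain u us' where "us = u # us'"
    using assms by (cases us) auto
  then show ?thesis
    using I_pos[of u] by (simp add: improves_def)
qed

lemma improves_merge_leaves:
  assumes "4 \<le> (\<Prod>t\<leftarrow>rest. Suc (I t))"
  shows "improves (Node (cherry # rest)) (Node (leaf # leaf # leaf # rest))"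
  using assms by (simp add: improves_def)

lemma improves_move_child:
  assumes "cs \<noteq> []" and "I (Node cs) \<le> I x"
  shows "improves (Node (x # Node (cs @ [b]) # rest)) (Node (x # Node cs # b # rest))"
proof -
  let ?P = "\<Prod>t\<leftarrow>cs. Suc (I t)" and ?S = "\<Sum>t\<leftarrow>cs. I t"
  let ?u = "Suc (I x) * (\<Prod>t\<leftarrow>rest. Suc (I t))"
  obtain c cs' where "cs = c # cs'"
    using assms(1) by (cases cs) auto
  then have "1 \<le> ?S"
    using I_pos[of c] by simp
  have "?P < Suc (I x)"
    using assms(2) by simp
  also have "\<dots> \<le> ?u"
    using prod_Suc_I_pos[of rest] by (simp del: mult_Suc)
  \<comment> \<open>the two values of \<open>I\<close> differ by \<open>I b * (u * S - P)\<close>\<close>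
  finally have "?P * I b < ?u * ?S * I b"
    using \<open>1 \<le> ?S\<close> I_pos[of b] by (simp add: less_le_trans)
  then show ?thesis
    by (simp add: improves_def algebra_simps)
qed

lemma improves_regraft_leaves:
  assumes "y \<noteq> leaf"
  shows "improves (Node [Node (ys @ [leaf, leaf]), y]) (Node [Node (y # ys), leaf, leaf])"
proof -
  obtain d where d: "(\<Prod>t\<leftarrow>ys. Suc (I t)) = Suc (\<Sum>t\<leftarrow>ys. I t) + d"
    using Suc_sum_I_le_prod_Suc_I le_Suc_ex by blast
  obtain e where e: "I y = 3 + e"
    using three_le_I_if_not_leaf[OF assms] le_Suc_ex by blast
  \<comment> \<open>after these substitutions every term of the difference is nonnegative\<close>
  show ?thesis
    by (simp add: improves_def d e algebra_simps)
qed

lemma three_mul_add_two_less_two_pow: "3 \<le> j \<Longrightarrow> 3 * j + 2 < 2 ^ Suc j"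
proof (induction j rule: dec_induct)
  case (step j)
  then show ?case
    by simp
qed simp

lemma improves_split_star:
  assumes "3 \<le> j"
  shows "improves (Node [cherry, Node (replicate j leaf)])
                  (Node [Node (replicate (Suc j) leaf), leaf, leaf])"
  using three_mul_add_two_less_two_pow[OF assms]
  by (simp add: improves_def sum_list_replicate numeral_2_eq_2)

lemma sub_append: "sub T (p @ q) = Option.bind (sub T p) (\<lambda>t. sub t q)"
  by (induction T p rule: sub.induct) auto

lemma minimal_no_unary_vertex:
  assumes "minimal T" and "p \<in> verts T" and "p \<noteq> []"
  shows "nchildren T p \<noteq> 1"
proof
  assume "nchildren T p = 1"
  obtain q i where p: "p = q @ [i]"
    using assms(3) by (metis rev_exhaust)
  obtain t where q: "sub T q = Some t" and "sub t [i] \<noteq> None"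
    using assms(2) by (cases "sub T q") (auto simp: verts_def p sub_append)
  moreover obtain ts where t: "t = Node ts"
    by (cases t)
  ultimately have q: "sub T q = Some (Node ts)" and i: "i < length ts"
    by (auto split: if_splits)
  have "sub T p = Some (ts ! i)"
    using q i by (simp add: p sub_append)
  then obtain S where S: "ts ! i = Node [S]"
    using \<open>nchildren T p = 1\<close> by (cases "ts ! i") (auto simp: nchildren_def length_Suc_conv)
  obtain xs ys where "ts = xs @ Node [S] # ys"
    using id_take_nth_drop[OF i] unfolding S by blast
  then have "mset ts = mset (Node [S] # xs @ ys)"
    by simp
  then have "improves (Node (S # leaf # xs @ ys)) (Node ts)"
    using improves_contract_unary improves_mset by blast
  then show False
    using improves_at[OF q] not_minimal_if_improves assms(1) by blast
qed

lemma improvable_two_inner_children: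
  assumes "x \<noteq> leaf" and "y \<noteq> leaf"
  shows "\<exists>T'. improves T' (Node (x # y # b # rest))"
proof -
  have move: "\<exists>T'. improves T' (Node (x # y # b # rest))" if "I y \<le> I x" "y \<noteq> leaf" for x y
  proof -
    obtain cs where y: "y = Node cs" and "cs \<noteq> []"
      using \<open>y \<noteq> leaf\<close> by (cases y) auto
    have "improves (Node (x # Node (cs @ [b]) # rest)) (Node (x # Node cs # b # rest))"
      using \<open>cs \<noteq> []\<close> \<open>I y \<le> I x\<close> unfolding y by (rule improves_move_child)
    then show ?thesis
      unfolding y ..
  qed
  consider "I y \<le> I x" | "I x \<le> I y"
    by linarith
  then show ?thesis
  proof cases
    case 1
    then show ?thesis
      using move assms(2) by blast
  next
    case 2
    then obtain T' where "improves T' (Node (y # x # b # rest))"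
      using move assms(1) by blast
    then have "improves T' (Node (x # y # b # rest))"
      using improves_mset[of "x # y # b # rest" "y # x # b # rest"] by simp
    then show ?thesis ..
  qed
qed

lemma improvable_inner_child_two_leaves:
  assumes "5 \<le> order x"
  shows "\<exists>T'. improves T' (Node [x, leaf, leaf])"
proof -
  obtain ys where x: "x = Node ys"
    by (cases x)
  show ?thesis
  proof (cases "\<exists>y\<in>set ys. y \<noteq> leaf")
    case True
    then obtain y where y: "y \<in> set ys" "y \<noteq> leaf"
      by blast
    let ?ys' = "remove1 y ys"
    have "mset ys = mset (y # ?ys')"
      using y(1) by simp
    then have "I x = I (Node (y # ?ys'))" "order x = order (Node (y # ?ys'))"
      unfolding x by (rule I_Node_mset, rule order_Node_mset)
    then have "improves (Node [Node (?ys' @ [leaf, leaf]), y]) (Node [x, leaf, leaf])"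
      using improves_regraft_leaves[OF y(2), of ?ys']
        improves_child_cong[of x "Node (y # ?ys')" _ "[]" "[leaf, leaf]"]
      by simp
    then show ?thesis ..
  next
    case False
    then obtain k where ys: "ys = replicate k leaf"
      by (metis replicate_length_same)
    then have "5 \<le> Suc k"
      using assms by (simp add: x sum_list_replicate)
    then obtain j where "k = Suc j" "3 \<le> j"
      by (cases k) auto
    then show ?thesis
      using improves_split_star unfolding x ys by blast
  qed
qed

lemma split_leaf_children:
  obtains inner L where "mset ts = mset (inner @ replicate L leaf)" and "leaf \<notin> set inner"
proof -
  have "mset ts = mset (filter (\<lambda>t. t \<noteq> leaf) ts @ replicate (count (mset ts) leaf) leaf)"
    using multiset_partition[of "mset ts" "\<lambda>t. t \<noteq> leaf"] by (simp add: filter_eq_replicate_mset)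
  then show thesis
    by (rule that) simp
qed

lemma root_children_cases:
  assumes "mset ts = mset (inner @ replicate L leaf)" and "ts \<noteq> []" and "length ts \<noteq> 2"
  obtains (unary) "length ts = 1"
    | (leaves) "3 \<le> L"
    | (one_inner) x where "inner = [x]" and "L = 2"
    | (two_inner) x y zs where "inner = x # y # zs" and "3 \<le> length ts"
proof -
  have len: "length ts = length inner + L"
    using arg_cong[OF assms(1), of size] by simp
  show thesis
  proof (cases inner rule: remdups_adj.cases)
    case 1
    have "0 < length ts"
      using assms(2) by simp
    moreover have "length ts = L"
      using len 1 by simp
    ultimately have "length ts = 1 \<or> 3 \<le> L"
      using assms(3) by linarith
    then show ?thesis
      using unary leaves by blast
  next
    case (2 x)
    then have "length ts = 1 \<or> 3 \<le> L \<or> L = 2"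
      using len assms(3) by auto
    then show ?thesis
      using unary leaves one_inner 2 by blast
  next
    case (3 x y zs)
    moreover have "length ts = length zs + L + 2"
      using len 3 by simp
    then have "3 \<le> length ts"
      using assms(3) by linarith
    ultimately show ?thesis
      by (rule two_inner)
  qed
qed

lemma improvable_if_root_not_binary:
  assumes "length ts \<noteq> 2" and "8 \<le> order (Node ts)"
  shows "\<exists>T'. improves T' (Node ts)"
proof -
  obtain inner L where mset_ts: "mset ts = mset (inner @ replicate L leaf)"
    and inner: "leaf \<notin> set inner"
    by (rule split_leaf_children)
  have from_mset: "\<exists>T'. improves T' (Node ts)" if "mset ts = mset ts'" "improves T' (Node ts')" for ts' T'
    using that improves_mset by blast
  have "ts \<noteq> []"
    using assms(2) by auto
  from mset_ts this assms(1) show ?thesis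
  proof (cases rule: root_children_cases)
    case unary
    then obtain us where "ts = [Node us]"
      by (metis kids.cases length_Suc_conv length_0_conv One_nat_def)
    moreover have "us \<noteq> []"
      using assms(2) calculation by auto
    ultimately show ?thesis
      using improves_contract_unary_root by blast
  next
    case leaves
    define rest where "rest = inner @ replicate (L - 3) leaf"
    have "replicate L leaf = replicate 3 leaf @ replicate (L - 3) leaf"
      using leaves by (metis le_add_diff_inverse replicate_add)
    then have "mset ts = mset (leaf # leaf # leaf # rest)"
      using mset_ts by (simp add: rest_def numeral_3_eq_3)
    moreover have "2 \<le> length rest \<or> (\<exists>t\<in>set rest. t \<noteq> leaf)"
    proof (cases inner)
      case Nil
      then show ?thesis
        using assms(2) order_Node_mset[OF mset_ts] by (simp add: rest_def sum_list_replicate)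
    qed (use inner in \<open>auto simp: rest_def\<close>)
    ultimately show ?thesis
      using from_mset improves_merge_leaves four_le_prod_Suc_I by blast
  next
    case (one_inner x)
    then have "mset ts = mset [x, leaf, leaf]"
      using mset_ts by (simp add: numeral_2_eq_2)
    moreover from this have "5 \<le> order x"
      using assms(2) order_Node_mset by fastforce
    ultimately show ?thesis
      using from_mset improvable_inner_child_two_leaves by blast
  next
    case (two_inner x y zs)
    then obtain b rest where "zs @ replicate L leaf = b # rest"
      using arg_cong[OF mset_ts, of size] by (cases "zs @ replicate L leaf") auto
    then have "mset ts = mset (x # y # b # rest)"
      using mset_ts two_inner(1) by (metis append_Cons)
    moreover have "x \<noteq> leaf" "y \<noteq> leaf"
      using inner two_inner(1) by auto
    ultimately show ?thesis
      using from_mset improvable_two_inner_children by blast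
  qed
qed

lemma minimal_root_binary:
  assumes "minimal T" and "8 \<le> order T"
  shows "nchildren T [] = 2"
proof -
  obtain ts where T: "T = Node ts"
    by (cases T)
  show ?thesis
    using improvable_if_root_not_binary[of ts] not_minimal_if_improves assms
    by (auto simp: T nchildren_def)
qed

theorem lemma3p1:
  fixes T :: rtree and n :: nat
  assumes "minimal T" and "order T = n"
  shows "(\<forall>p\<in>verts T. p \<noteq> [] \<longrightarrow> nchildren T p = 0 \<or> nchildren T p \<ge> 2)
         \<and> (n \<ge> 8 \<longrightarrow> nchildren T [] = 2)"
  using minimal_no_unary_vertex[OF assms(1)] minimal_root_binary[OF assms(1)] assms(2)
  by fastforce

end
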